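(* Let $K\in\mathbb{R}^{n_u\times n_x}$, $\underline P\in\mathbb{R}^{\underline m\times n_x}$, $\underline b\in\mathbb{R}^{\underline m}$, $\bar P\in\mathbb{R}^{\bar m\times n_x}$, $\bar b\in\mathbb{R}^{\bar m}$ with $\underline b,\bar b\ge0$, and constraint sets $\mathcal{X}=\mathcal{P}(V^x,v^x)$ with $V^x\in\mathbb{R}^{m_x\times n_x}$, $v^x\in\mathbb{R}^{m_x}$, $v^x>0$, and $\mathcal{U}=\mathcal{P}(V^u,v^u)$ with $V^u\in\mathbb{R}^{m_u\times n_u}$, $v^u\in\mathbb{R}^{m_u}$, $v^u>0$. (a) If for every $i\in\{1,\dots,m_x\}$ there exist $\underline S_{[i]}\in\mathbb{D}_+^{\underline m}$, $\bar S_{[i]}\in\mathbb{D}_+^{\bar m}$ with $$\begin{bmatrix}2v^x_i-\underline b^\top\underline S_{[i]}\underline b-\bar b^\top\bar S_{[i]}\bar b & V^x_i & V^x_i\\ * & \underline P^\top\underline S_{[i]}\underline P & \mathbf 0\\ * & * & \bar P^\top\bar S_{[i]}\bar P\end{bmatrix}\succ0,$$ then $\mathcal{P}(\underline P,\underline b)\oplus\mathcal{P}(\bar P,\bar b)\subseteq\mathcal{X}$. (b) If for every $i\in\{1,\dots,m_u\}$ there exist $\underline R_{[i]}\in\mathbb{D}_+^{\underline m}$, $\bar R_{[i]}\in\mathbb{D}_+^{\bar m}$ with $$\begin{bmatrix}2v^u_i-\underline b^\top\underline R_{[i]}\underline b-\bar b^\top\bar R_{[i]}\bar b & V^u_iK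 & V^u_iK\\ * & \underline P^\top\underline R_{[i]}\underline P & \mathbf 0\\ * & * & \bar P^\top\bar R_{[i]}\bar P\end{bmatrix}\succ0,$$ then $K\mathcal{P}(\underline P,\underline b)\oplus K\mathcal{P}(\bar P,\bar b)\subseteq\mathcal{U}$.
   Context: For $M\in\mathbb{R}^{m\times n}$ and $b\in\mathbb{R}^m$, $\mathcal{P}(M,b):=\{x\in\mathbb{R}^n:-b\le Mx\le b\}$ (componentwise). $M_i$ denotes the $i$-th row of $M$, $b_i$ the $i$-th entry of $b$. $\mathbb{D}_+^m$ is the set of $m\times m$ diagonal matrices with positive diagonal entries. $\succ0$ means symmetric positive definite; $*$ denotes blocks determined by symmetry. $\oplus$ is Minkowski sum, and $K\mathcal{S}:=\{Kx:x\in\mathcal{S}\}$. *)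

theory Defs
  imports "HOL-Analysis.Analysis"
begin

definition sympoly :: "real^'n^'m \<Rightarrow> real^'m \<Rightarrow> (real^'n) set" where
  "sympoly M b = {x. \<forall>i. - (b $ i) \<le> (M *v x) $ i \<and> (M *v x) $ i \<le> b $ i}"

definition pos_diag :: "real^'m^'m \<Rightarrow> bool" where
  "pos_diag D \<longleftrightarrow> (\<forall>i j. i \<noteq> j \<longrightarrow> D $ i $ j = 0) \<and> (\<forall>i. D $ i $ i > 0)"

definition pos_def :: "real^'n^'n \<Rightarrow> bool" where
  "pos_def M \<longleftrightarrow> transpose M = M \<and> (\<forall>x. x \<noteq> 0 \<longrightarrow> x \<bullet> (M *v x) > 0)"

definition minkowski_sum :: "'a::plus set \<Rightarrow> 'a set \<Rightarrow> 'a set" where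
  "minkowski_sum A B = {a + c | a c. a \<in> A \<and> c \<in> B}"

text \<open>The symmetric 3x3 block matrix
  [[a, r, s], [*, A, B], [*, *, C]] with scalar a, row vectors r, s, and
  blocks A, B, C; the lower blocks are determined by symmetry.\<close>
definition blk3 :: "real \<Rightarrow> real^'n \<Rightarrow> real^'m \<Rightarrow> real^'n^'n \<Rightarrow> real^'m^'n \<Rightarrow> real^'m^'m
    \<Rightarrow> real^(unit + 'n + 'm)^(unit + 'n + 'm)" where
  "blk3 a r s A B C = (\<chi> i j.
     (case i of
        Inl _ \<Rightarrow> (case j of Inl _ \<Rightarrow> a | Inr (Inl q) \<Rightarrow> r $ q | Inr (Inr q) \<Rightarrow> s $ q)
      | Inr (Inl p) \<Rightarrow> (case j of Inl _ \<Rightarrow> r $ p | Inr (Inl q) \<Rightarrow> A $ p $ q | Inr (Inr q) \<Rightarrow> B $ p $ q)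
      | Inr (Inr p) \<Rightarrow> (case j of Inl _ \<Rightarrow> s $ p | Inr (Inl q) \<Rightarrow> B $ q $ p | Inr (Inr q) \<Rightarrow> C $ p $ q)))"

end

theory Submission imports Defs begin

(* Evaluate the block quadratic form at z = (1, c x, c y) with c = 1 or c = -1. Positive
   definiteness gives
     0 < 2 v - bl.Sl bl - bb.Sb bb + 2 c r.(x + y) + (Pl x).Sl (Pl x) + (Pb y).Sb (Pb y).
   For x, y in the two polytopes each quadratic term is at most the corresponding b.S b,
   because S is diagonal with positive entries and |P x| <= b componentwise; hence
   |r.(x + y)| < v. Part (b) is part (a) for the constraint matrix Vu K, since
   K x + K y = K (x + y). *)

lemma inner_congruence_mult:
  fixes P :: "real^'n^'m" and S :: "real^'m^'m"
  shows "x \<bullet> ((transpose P ** S ** P) *v x) = (P *v x) \<bullet> (S *v (P *v x))"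
  by (metis dot_lmul_matrix matrix_vector_mul_assoc vector_transpose_matrix)

lemma pos_diag_mult_vec_nth:
  assumes "pos_diag S"
  shows "(S *v w) $ j = S $ j $ j * w $ j"
proof -
  have "(S *v w) $ j = (\<Sum>k\<in>UNIV. S $ j $ k * w $ k)"
    by (simp add: matrix_vector_mult_def)
  also have "\<dots> = S $ j $ j * w $ j"
    using assms unfolding pos_diag_def by (subst sum.remove[of _ j]) auto
  finally show ?thesis .
qed

lemma pos_diag_quadratic_form:
  assumes "pos_diag S"
  shows "w \<bullet> (S *v w) = (\<Sum>j\<in>UNIV. S $ j $ j * (w $ j)\<^sup>2)"
  unfolding inner_vec_def pos_diag_mult_vec_nth[OF assms]
  by (simp add: power2_eq_square mult.commute mult.left_commute)

lemma congruence_quadratic_form_le_on_sympoly: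
  fixes P :: "real^'n^'m" and S :: "real^'m^'m"
  assumes S: "pos_diag S" and x: "x \<in> sympoly P b"
  shows "x \<bullet> ((transpose P ** S ** P) *v x) \<le> b \<bullet> (S *v b)"
proof -
  have "((P *v x) $ j)\<^sup>2 \<le> (b $ j)\<^sup>2" for j
  proof -
    have "\<bar>(P *v x) $ j\<bar> \<le> b $ j"
      using x unfolding sympoly_def by (simp add: abs_le_iff) (metis minus_le_iff)
    then show ?thesis by (metis abs_ge_zero power2_abs power_mono)
  qed
  moreover have "0 \<le> S $ j $ j" for j
    using S unfolding pos_diag_def by (simp add: less_imp_le)
  ultimately show ?thesis
    unfolding inner_congruence_mult pos_diag_quadratic_form[OF S]
    by (intro sum_mono mult_left_mono)
qed

lemma sum_UNIV_Plus:
  fixes f :: "'a::finite + 'b::finite \<Rightarrow> 'c::comm_monoid_add"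
  shows "(\<Sum>i\<in>UNIV. f i) = (\<Sum>u\<in>UNIV. f (Inl u)) + (\<Sum>v\<in>UNIV. f (Inr v))"
  by (subst UNIV_Plus_UNIV[symmetric], subst sum.Plus) (auto simp: o_def)

lemma blk3_quadratic_form:
  fixes r x :: "real^'n" and s y :: "real^'m" and c :: real
  defines "z \<equiv> (\<chi> i. case i of Inl u \<Rightarrow> 1 | Inr (Inl p) \<Rightarrow> c * x $ p | Inr (Inr q) \<Rightarrow> c * y $ q)
     :: real^(unit + 'n + 'm)"
  shows "z \<bullet> (blk3 a r s A 0 C *v z)
           = a + 2 * c * (r \<bullet> x + s \<bullet> y) + c\<^sup>2 * (x \<bullet> (A *v x) + y \<bullet> (C *v y))"
  unfolding inner_vec_def matrix_vector_mult_def blk3_def z_def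
  by (simp add: sum_UNIV_Plus inner_vec_def matrix_vector_mult_def algebra_simps
        sum.distrib sum_distrib_left power2_eq_square)

lemma blk3_certificate_bounds_row:
  fixes Pl :: "real^'n^'ml" and Pb :: "real^'n^'mb"
  assumes pd: "pos_def (blk3 (2 * v - bl \<bullet> (Sl *v bl) - bb \<bullet> (Sb *v bb)) r r
                  (transpose Pl ** Sl ** Pl) 0 (transpose Pb ** Sb ** Pb))"
    and Sl: "pos_diag Sl" and Sb: "pos_diag Sb"
    and x: "x \<in> sympoly Pl bl" and y: "y \<in> sympoly Pb bb"
  shows "\<bar>r \<bullet> (x + y)\<bar> < v"
proof -
  have "0 < v + c * (r \<bullet> (x + y))" if c: "c\<^sup>2 = 1" for c :: real
  proof -
    define z where "z = ((\<chi> i. case i of Inl u \<Rightarrow> 1 | Inr (Inl p) \<Rightarrow> c * x $ p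
                                          | Inr (Inr q) \<Rightarrow> c * y $ q) :: real^(unit + 'n + 'n))"
    have "z \<noteq> 0"
      by (metis z_def sum.case(1) vec_lambda_beta zero_index zero_neq_one)
    then have "0 < z \<bullet> (blk3 (2 * v - bl \<bullet> (Sl *v bl) - bb \<bullet> (Sb *v bb)) r r
                  (transpose Pl ** Sl ** Pl) 0 (transpose Pb ** Sb ** Pb) *v z)"
      using pd unfolding pos_def_def by blast
    also have "\<dots> = 2 * v - bl \<bullet> (Sl *v bl) - bb \<bullet> (Sb *v bb) + 2 * c * (r \<bullet> x + r \<bullet> y)
        + c\<^sup>2 * (x \<bullet> ((transpose Pl ** Sl ** Pl) *v x) + y \<bullet> ((transpose Pb ** Sb ** Pb) *v y))"
      unfolding z_def by (rule blk3_quadratic_form)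
    also have "c\<^sup>2 = 1" by (fact c)
    also have "x \<bullet> ((transpose Pl ** Sl ** Pl) *v x) \<le> bl \<bullet> (Sl *v bl)"
      by (rule congruence_quadratic_form_le_on_sympoly[OF Sl x])
    also have "y \<bullet> ((transpose Pb ** Sb ** Pb) *v y) \<le> bb \<bullet> (Sb *v bb)"
      by (rule congruence_quadratic_form_le_on_sympoly[OF Sb y])
    finally show ?thesis by (simp add: inner_add_right)
  qed
  from this[of 1] this[of "-1"] show ?thesis by auto
qed

lemma minkowski_sum_sympoly_subset_sympoly:
  fixes Pl :: "real^'n^'ml" and Pb :: "real^'n^'mb" and V :: "real^'n^'k"
  assumes "\<forall>i. \<exists>Sl Sb. pos_diag Sl \<and> pos_diag Sb \<and>
             pos_def (blk3 (2 * v $ i - bl \<bullet> (Sl *v bl) - bb \<bullet> (Sb *v bb)) (V $ i) (V $ i)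
                           (transpose Pl ** Sl ** Pl) 0 (transpose Pb ** Sb ** Pb))"
  shows "minkowski_sum (sympoly Pl bl) (sympoly Pb bb) \<subseteq> sympoly V v"
proof
  fix w assume "w \<in> minkowski_sum (sympoly Pl bl) (sympoly Pb bb)"
  then obtain x y where w: "w = x + y" and x: "x \<in> sympoly Pl bl" and y: "y \<in> sympoly Pb bb"
    unfolding minkowski_sum_def by blast
  have "\<bar>(V *v w) $ i\<bar> < v $ i" for i
    using assms blk3_certificate_bounds_row[OF _ _ _ x y]
    unfolding matrix_vector_mul_component w by blast
  then show "w \<in> sympoly V v"
    unfolding sympoly_def by (auto intro: less_imp_le simp: abs_less_iff minus_less_iff)
qed

lemma matrix_matrix_mult_row: "(A ** B) $ i = A $ i v* B"
  by (simp add: vec_eq_iff matrix_matrix_mult_def vector_matrix_mult_def mult.commute)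

lemma minkowski_sum_image_mult_vec:
  "minkowski_sum ((\<lambda>x. K *v x) ` A) ((\<lambda>x. K *v x) ` B) = (\<lambda>x. K *v x) ` minkowski_sum A B"
  unfolding minkowski_sum_def by (force simp: matrix_vector_right_distrib)

lemma image_mult_vec_subset_sympoly_iff:
  "(\<lambda>x. K *v x) ` A \<subseteq> sympoly V v \<longleftrightarrow> A \<subseteq> sympoly (V ** K) v"
  unfolding sympoly_def by (auto simp: matrix_vector_mul_assoc)

theorem mainTheorem4:
  fixes K :: "real^'nx^'nu"
    and Pl :: "real^'nx^'ml" and bl :: "real^'ml"
    and Pb :: "real^'nx^'mb" and bb :: "real^'mb"
    and Vx :: "real^'nx^'mx" and vx :: "real^'mx"
    and Vu :: "real^'nu^'mu" and vu :: "real^'mu"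
  assumes bl_nonneg: "\<forall>i. bl $ i \<ge> 0"
    and bb_nonneg: "\<forall>i. bb $ i \<ge> 0"
    and vx_pos: "\<forall>i. vx $ i > 0"
    and vu_pos: "\<forall>i. vu $ i > 0"
  shows "((\<forall>i. \<exists>Sl Sb. pos_diag Sl \<and> pos_diag Sb \<and>
             pos_def (blk3 (2 * vx $ i - bl \<bullet> (Sl *v bl) - bb \<bullet> (Sb *v bb))
                           (Vx $ i) (Vx $ i)
                           (transpose Pl ** Sl ** Pl) 0 (transpose Pb ** Sb ** Pb)))
          \<longrightarrow> minkowski_sum (sympoly Pl bl) (sympoly Pb bb) \<subseteq> sympoly Vx vx)
       \<and> ((\<forall>i. \<exists>Rl Rb. pos_diag Rl \<and> pos_diag Rb \<and>
             pos_def (blk3 (2 * vu $ i - bl \<bullet> (Rl *v bl) - bb \<bullet> (Rb *v bb))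
                           (Vu $ i v* K) (Vu $ i v* K)
                           (transpose Pl ** Rl ** Pl) 0 (transpose Pb ** Rb ** Pb)))
          \<longrightarrow> minkowski_sum ((\<lambda>x. K *v x) ` sympoly Pl bl) ((\<lambda>x. K *v x) ` sympoly Pb bb)
                \<subseteq> sympoly Vu vu)"
proof (intro conjI impI)
  show "minkowski_sum (sympoly Pl bl) (sympoly Pb bb) \<subseteq> sympoly Vx vx"
    if "\<forall>i. \<exists>Sl Sb. pos_diag Sl \<and> pos_diag Sb \<and>
             pos_def (blk3 (2 * vx $ i - bl \<bullet> (Sl *v bl) - bb \<bullet> (Sb *v bb)) (Vx $ i) (Vx $ i)
                           (transpose Pl ** Sl ** Pl) 0 (transpose Pb ** Sb ** Pb))"
    using that by (rule minkowski_sum_sympoly_subset_sympoly)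
next
  assume "\<forall>i. \<exists>Rl Rb. pos_diag Rl \<and> pos_diag Rb \<and>
             pos_def (blk3 (2 * vu $ i - bl \<bullet> (Rl *v bl) - bb \<bullet> (Rb *v bb))
                           (Vu $ i v* K) (Vu $ i v* K)
                           (transpose Pl ** Rl ** Pl) 0 (transpose Pb ** Rb ** Pb))"
  then have "minkowski_sum (sympoly Pl bl) (sympoly Pb bb) \<subseteq> sympoly (Vu ** K) vu"
    by (intro minkowski_sum_sympoly_subset_sympoly) (simp add: matrix_matrix_mult_row)
  then show "minkowski_sum ((\<lambda>x. K *v x) ` sympoly Pl bl) ((\<lambda>x. K *v x) ` sympoly Pb bb)
               \<subseteq> sympoly Vu vu"
    by (simp add: minkowski_sum_image_mult_vec image_mult_vec_subset_sympoly_iff)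
qed

end
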